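(* For every $\epsilon>0$ and every real $X>1$, \[\sum_{n\ge1,\ n \text{ square-free}}\ \prod_{p\mid n}\frac{\log X}{p\log p}\ll X^{\epsilon},\] where the product is over the primes dividing $n$ and the implied constant depends only on $\epsilon$. *)

theory Defs
  imports "HOL-Analysis.Analysis" "HOL-Computational_Algebra.Computational_Algebra"
begin

end

theory Submission
  imports Defs
begin

text \<open>
  Put \<open>L = ln X\<close> and \<open>b p = 1 / (p ln p)\<close>. Since square-free numbers correspond to finite sets
  of primes, every finite part of the sum is bounded by the Euler product
  \<open>\<Prod>\<^sub>p (1 + L b p)\<close>. The weights \<open>b p\<close> are summable over the primes: by Chebyshev's
  bound, coming from the fact that the primes in \<open>(n, 2n]\<close> divide \<open>(2n choose n)\<close>, the primes
  in \<open>(2\<^sup>k, 2\<^bsup>k+1\<^esup>]\<close> contribute \<open>O(1/k\<^sup>2)\<close>. Choose a finite set of primes outside of which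
  the weights sum to at most \<open>\<epsilon>/2\<close>. Those outside contribute at most
  \<open>exp (L \<Sum> b p) \<le> X\<^bsup>\<epsilon>/2\<^esup>\<close>, and the boundedly many primes inside contribute a factor
  polynomial in \<open>L\<close>, which is \<open>O(X\<^bsup>\<epsilon>/2\<^esup>)\<close>.
\<close>

lemma prod_primes_dvd:
  fixes m :: "'a :: factorial_semiring_gcd"
  assumes "finite Q" "\<And>p. p \<in> Q \<Longrightarrow> prime p" "\<And>p. p \<in> Q \<Longrightarrow> p dvd m"
  shows "\<Prod>Q dvd m"
  using assms
proof (induction Q rule: finite_induct)
  case (insert q Q)
  have "coprime q (\<Prod>Q)"
    using insert by (intro prod_coprime_right primes_coprime) auto
  with insert show ?case
    by (simp add: divides_mult)
qed simp

lemma prod_primes_between_dvd_central_binomial: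
  "\<Prod>{p. prime p \<and> n < p \<and> p \<le> 2 * n} dvd (2 * n choose n)"
proof (rule prod_primes_dvd)
  show "finite {p. prime p \<and> n < p \<and> p \<le> 2 * n}"
    by (rule finite_subset[of _ "{..2 * n}"]) auto
next
  fix p assume p: "p \<in> {p. prime p \<and> n < p \<and> p \<le> 2 * n}"
  then show "prime p" by simp
  have "fact n * fact n * (2 * n choose n) = (fact (2 * n) :: nat)"
    using binomial_fact_lemma[of n "2 * n"] by simp
  moreover have "p dvd (fact (2 * n) :: nat)" "\<not> p dvd (fact n :: nat)"
    using p by (auto simp: prime_dvd_fact_iff)
  ultimately show "p dvd (2 * n choose n)"
    using p by (metis mem_Collect_eq prime_dvd_mult_iff)
qed

theorem chebyshev_power_card_primes_between_le:
  "n ^ card {p. prime p \<and> n < p \<and> p \<le> 2 * n} \<le> 4 ^ n"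
proof -
  define Q where "Q = {p. prime p \<and> n < p \<and> p \<le> 2 * n}"
  have "n ^ card Q = (\<Prod>p\<in>Q. n)" by simp
  also have "\<dots> \<le> \<Prod>Q"
    by (rule prod_mono) (auto simp: Q_def)
  also have "\<dots> \<le> 2 * n choose n"
    using prod_primes_between_dvd_central_binomial[of n]
    by (intro dvd_imp_le) (simp_all add: Q_def zero_less_binomial)
  also have "\<dots> \<le> 2 ^ (2 * n)" by (rule binomial_le_pow2)
  finally show ?thesis
    by (simp add: Q_def power_mult)
qed

lemma sum_primes_dyadic_block_le:
  assumes "k \<ge> 1"
  shows "(\<Sum>p | prime p \<and> 2 ^ k < p \<and> p \<le> 2 ^ Suc k. 1 / (real p * ln (real p)))
           \<le> 2 / (ln 2 * real k ^ 2)"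
proof -
  define n :: nat where "n = 2 ^ k"
  define Q where "Q = {p. prime p \<and> n < p \<and> p \<le> 2 * n}"
  have ln_n: "ln (real n) = real k * ln 2"
    by (simp add: n_def ln_realpow)
  have k_pos: "real k * ln 2 > 0" using assms by simp
  have "real (card Q) * (real k * ln 2) = ln (real (n ^ card Q))"
    using ln_n by (simp add: ln_realpow n_def)
  also have "\<dots> \<le> ln (real (4 ^ n))"
    using chebyshev_power_card_primes_between_le[of n]
    by (subst ln_le_cancel_iff) (simp_all only: Q_def of_nat_le_iff, simp_all add: n_def)
  also have "\<dots> = 2 * real n * ln 2"
    using ln_realpow[of 2 2] by (simp add: ln_realpow)
  finally have card_Q: "real (card Q) * (real k * ln 2) \<le> 2 * real n * ln 2" .
  have "(\<Sum>p\<in>Q. 1 / (real p * ln (real p))) \<le> (\<Sum>p\<in>Q. 1 / (real n * (real k * ln 2)))"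
  proof (intro sum_mono divide_left_mono mult_mono)
    fix p assume "p \<in> Q"
    then have "n < p" by (simp add: Q_def)
    then have "ln (real n) \<le> ln (real p)"
      by (simp add: n_def)
    with \<open>n < p\<close> show "real n \<le> real p" "real k * ln 2 \<le> ln (real p)"
      using ln_n by simp_all
  qed (use k_pos in \<open>auto simp: n_def Q_def prime_gt_1_nat\<close>)
  also have "\<dots> = real (card Q) * (real k * ln 2) / (real n * (real k * ln 2) ^ 2)"
    by (simp add: power2_eq_square)
  also have "\<dots> \<le> 2 * real n * ln 2 / (real n * (real k * ln 2) ^ 2)"
    using card_Q by (intro divide_right_mono) simp_all
  also have "\<dots> = 2 / (ln 2 * real k ^ 2)"
    by (simp add: n_def power2_eq_square field_simps)
  finally show ?thesis
    by (simp add: Q_def n_def)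
qed

lemma sum_primes_dyadic_block_le_inverse_Suc_square:
  "(\<Sum>p | prime p \<and> 2 ^ k < p \<and> p \<le> 2 ^ Suc k. 1 / (real p * ln (real p)))
     \<le> 8 / ln 2 * inverse (real (Suc k) ^ 2)"
proof (cases "k = 0")
  case True
  then have "{p. prime p \<and> 2 ^ k < p \<and> p \<le> 2 ^ Suc k} = {2 :: nat}"
    by (auto dest: prime_gt_1_nat)
  moreover have "1 / (2 * ln 2) \<le> 8 / (ln 2 :: real)"
    by (simp add: field_simps)
  ultimately show ?thesis
    using True by simp
next
  case False
  have "(2 :: real) / (ln 2 * real k ^ 2) \<le> 8 / ln 2 * inverse (real (Suc k) ^ 2)"
  proof -
    have "real (Suc k) \<le> 2 * real k"
      using False by simp
    then have "real (Suc k) ^ 2 \<le> (2 * real k) ^ 2"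
      by (rule power_mono) simp
    then have "real (Suc k) ^ 2 \<le> 4 * real k ^ 2"
      by (simp add: power_mult_distrib)
    then show ?thesis
      using False by (simp add: field_simps)
  qed
  with sum_primes_dyadic_block_le[of k] False show ?thesis
    by simp
qed

lemma sum_primes_atMost_power2_eq_sum_dyadic_blocks:
  fixes f :: "nat \<Rightarrow> 'a :: comm_monoid_add"
  shows "(\<Sum>p | prime p \<and> p \<le> 2 ^ K. f p) = (\<Sum>k<K. \<Sum>p | prime p \<and> 2 ^ k < p \<and> p \<le> 2 ^ Suc k. f p)"
proof (induction K)
  case 0
  have "{p :: nat. prime p \<and> p \<le> 2 ^ 0} = {}"
    by (auto dest: prime_gt_1_nat)
  then show ?case
    by (simp only: lessThan_0 sum.empty)
next
  case (Suc K)
  define A where "A = {p :: nat. prime p \<and> p \<le> 2 ^ K}"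
  define B where "B = {p :: nat. prime p \<and> 2 ^ K < p \<and> p \<le> 2 ^ Suc K}"
  have "finite A" "finite B"
    unfolding A_def B_def by (rule finite_subset[of _ "{..2 ^ Suc K}"], auto)+
  moreover have "{p. prime p \<and> p \<le> 2 ^ Suc K} = A \<union> B" "A \<inter> B = {}"
    by (auto simp: A_def B_def)
  ultimately have "(\<Sum>p | prime p \<and> p \<le> 2 ^ Suc K. f p) = sum f A + sum f B"
    by (simp add: sum.union_disjoint)
  with Suc show ?case
    by (simp add: A_def B_def)
qed

theorem summable_on_inverse_prime_mult_ln:
  "(\<lambda>p. 1 / (real p * ln (real p))) summable_on {p. prime p}"
proof (rule nonneg_bdd_above_summable_on)
  define g where "g k = 8 / ln 2 * inverse (real (Suc k) ^ 2)" for k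
  have g: "summable g"
    unfolding g_def
    using summable_ignore_initial_segment[OF inverse_power_summable[of 2, where 'a = real], of 1]
    by (intro summable_mult) simp_all
  have pos: "0 < real p * ln (real p)" if "prime p" for p
    using prime_gt_1_nat[OF that] by simp
  then show "0 \<le> 1 / (real p * ln (real p))" if "p \<in> {p. prime p}" for p
    using that by (simp add: less_imp_le)
  show "bdd_above (sum (\<lambda>p. 1 / (real p * ln (real p))) ` {F. F \<subseteq> {p. prime p} \<and> finite F})"
  proof (rule bdd_aboveI2)
    fix F :: "nat set" assume F: "F \<in> {F. F \<subseteq> {p. prime p} \<and> finite F}"
    define K where "K = Max (insert 0 F)"
    have "F \<subseteq> {p. prime p \<and> p \<le> 2 ^ K}"
    proof
      fix p assume "p \<in> F"
      then have "p \<le> K" using F by (simp add: K_def)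
      also have "K < 2 ^ K" by (rule less_exp)
      finally show "p \<in> {p. prime p \<and> p \<le> 2 ^ K}" using F \<open>p \<in> F\<close> by auto
    qed
    then have "(\<Sum>p\<in>F. 1 / (real p * ln (real p)))
                 \<le> (\<Sum>p | prime p \<and> p \<le> 2 ^ K. 1 / (real p * ln (real p)))"
      by (intro sum_mono2) (auto intro: less_imp_le pos)
    also have "\<dots> \<le> (\<Sum>k<K. g k)"
      unfolding sum_primes_atMost_power2_eq_sum_dyadic_blocks g_def
      by (intro sum_mono sum_primes_dyadic_block_le_inverse_Suc_square)
    also have "\<dots> \<le> suminf g"
      using g by (rule sum_le_suminf) (simp_all add: g_def)
    finally show "(\<Sum>p\<in>F. 1 / (real p * ln (real p))) \<le> suminf g" .
  qed
qed

lemma nonneg_summable_on_small_outside_finite: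
  fixes f :: "'a \<Rightarrow> real"
  assumes "f summable_on A" "\<And>x. x \<in> A \<Longrightarrow> 0 \<le> f x" "r > 0"
  obtains F where "finite F" "F \<subseteq> A" "\<And>G. finite G \<Longrightarrow> G \<subseteq> A - F \<Longrightarrow> sum f G \<le> r"
proof -
  obtain F where F: "finite F" "F \<subseteq> A" "dist (sum f F) (infsum f A) \<le> r"
    using infsum_finite_approximation[OF assms(1,3)] by blast
  have "sum f G \<le> r" if G: "finite G" "G \<subseteq> A - F" for G
  proof -
    have "sum f G + sum f F = sum f (G \<union> F)"
      using F G by (intro sum.union_disjoint[symmetric]) auto
    also have "\<dots> \<le> infsum f A"
      using F G assms(1,2) by (intro finite_sum_le_infsum) auto
    finally show ?thesis
      using F(3) by (simp add: dist_real_def)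
  qed
  with F that show ?thesis by blast
qed

lemma one_plus_mult_le_mult_exp:
  fixes B L \<delta> :: real
  assumes "0 \<le> B" "0 < \<delta>" "0 \<le> L"
  shows "1 + B * L \<le> max 1 (B / \<delta>) * exp (\<delta> * L)"
proof -
  define D where "D = max 1 (B / \<delta>)"
  have "B * L = B / \<delta> * (\<delta> * L)"
    using assms by simp
  also have "\<dots> \<le> D * (\<delta> * L)"
    using assms by (intro mult_right_mono) (simp_all add: D_def)
  finally have "1 + B * L \<le> D * (1 + \<delta> * L)"
    by (simp add: D_def algebra_simps)
  also have "\<dots> \<le> D * exp (\<delta> * L)"
    by (intro mult_left_mono exp_ge_add_one_self) (simp add: D_def)
  finally show ?thesis
    by (simp add: D_def)
qed

lemma prod_one_plus_mult_le_power_mult_exp: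
  fixes b :: "'a \<Rightarrow> real"
  assumes "\<And>x. x \<in> S \<Longrightarrow> 0 \<le> b x \<and> b x \<le> B" "card S \<le> K" "0 < \<delta>" "0 \<le> L"
  shows "(\<Prod>x\<in>S. 1 + L * b x) \<le> max 1 (B / \<delta>) ^ K * exp (K * \<delta> * L)"
proof -
  define D where "D = max 1 (B / \<delta>)"
  have one_le: "1 \<le> D * exp (\<delta> * L)"
    using assms(3,4) by (intro order_trans[OF _ mult_mono[of 1 D 1]]) (simp_all add: D_def)
  have "(\<Prod>x\<in>S. 1 + L * b x) \<le> (D * exp (\<delta> * L)) ^ K"
  proof (rule prod_le_power[OF _ assms(2) one_le])
    fix x assume "x \<in> S"
    with assms have b: "0 \<le> b x" "b x \<le> B" by auto
    then have "1 + L * b x \<le> 1 + B * L"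
      using mult_left_mono[OF b(2) assms(4)] by (simp add: mult.commute)
    also have "\<dots> \<le> D * exp (\<delta> * L)"
      unfolding D_def using b assms(3,4) by (intro one_plus_mult_le_mult_exp) simp_all
    finally show "0 \<le> 1 + L * b x \<and> 1 + L * b x \<le> D * exp (\<delta> * L)"
      using b assms(4) by simp
  qed
  also have "\<dots> = D ^ K * exp (K * \<delta> * L)"
    by (simp add: power_mult_distrib mult.assoc flip: exp_of_nat_mult)
  finally show ?thesis
    by (simp add: D_def)
qed

lemma summable_on_prod_one_plus_mult_le_exp:
  fixes b :: "'a \<Rightarrow> real"
  assumes "b summable_on A" "\<And>x. x \<in> A \<Longrightarrow> 0 \<le> b x" "\<epsilon> > 0"
  obtains C where "\<And>L P. 0 \<le> L \<Longrightarrow> finite P \<Longrightarrow> P \<subseteq> A \<Longrightarrow> (\<Prod>x\<in>P. 1 + L * b x) \<le> C * exp (\<epsilon> * L)"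
proof -
  obtain F where F: "finite F" "F \<subseteq> A"
    and outside: "\<And>G. finite G \<Longrightarrow> G \<subseteq> A - F \<Longrightarrow> sum b G \<le> \<epsilon> / 2"
    using nonneg_summable_on_small_outside_finite[OF assms(1,2), of "\<epsilon> / 2"] assms(3) by auto
  define K where "K = card F"
  define \<delta> where "\<delta> = \<epsilon> / (2 * (K + 1))"
  define C where "C = max 1 (sum b F / \<delta>) ^ K"
  have "(\<Prod>x\<in>P. 1 + L * b x) \<le> C * exp (\<epsilon> * L)" if L: "0 \<le> L" and P: "finite P" "P \<subseteq> A" for L P
  proof -
    have bounded: "0 \<le> b x \<and> b x \<le> sum b F" if "x \<in> P \<inter> F" for x
      using that F assms(2) by (auto intro: member_le_sum)
    have card: "card (P \<inter> F) \<le> K"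
      unfolding K_def using F by (intro card_mono) auto
    have "\<delta> > 0"
      using assms(3) by (simp add: \<delta>_def)
    from bounded card this L have "(\<Prod>x\<in>P \<inter> F. 1 + L * b x) \<le> C * exp (K * \<delta> * L)"
      unfolding C_def by (rule prod_one_plus_mult_le_power_mult_exp)
    also have "\<dots> \<le> C * exp (\<epsilon> / 2 * L)"
    proof -
      have "K * \<delta> \<le> \<epsilon> / 2"
        using assms(3) by (simp add: \<delta>_def field_simps)
      then have "K * \<delta> * L \<le> \<epsilon> / 2 * L"
        using L by (rule mult_right_mono)
      then show ?thesis
        by (intro mult_left_mono) (simp_all add: C_def)
    qed
    finally have "(\<Prod>x\<in>P \<inter> F. 1 + L * b x) \<le> C * exp (\<epsilon> / 2 * L)" .
    moreover have "(\<Prod>x\<in>P - F. 1 + L * b x) \<le> exp (\<epsilon> / 2 * L)"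
    proof -
      have "(\<Prod>x\<in>P - F. 1 + L * b x) \<le> exp (\<Sum>x\<in>P - F. L * b x)"
        using P assms(2) L by (intro prod_le_exp_sum) auto
      also have "\<dots> \<le> exp (\<epsilon> / 2 * L)"
      proof -
        have "sum b (P - F) \<le> \<epsilon> / 2"
          using P by (intro outside) auto
        then have "L * sum b (P - F) \<le> L * (\<epsilon> / 2)"
          using L by (rule mult_left_mono)
        then show ?thesis
          by (simp add: sum_distrib_left mult_ac)
      qed
      finally show ?thesis .
    qed
    moreover have "0 \<le> (\<Prod>x\<in>P - F. 1 + L * b x)"
      using P assms(2) L by (intro prod_nonneg) auto
    ultimately have "(\<Prod>x\<in>P \<inter> F. 1 + L * b x) * (\<Prod>x\<in>P - F. 1 + L * b x)
                       \<le> C * exp (\<epsilon> / 2 * L) * exp (\<epsilon> / 2 * L)"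
      by (intro mult_mono) (simp_all add: C_def)
    also have "\<dots> = C * exp (\<epsilon> * L)"
      by (simp add: mult.assoc flip: exp_add)
    finally show ?thesis
      by (simp add: prod.Int_Diff[OF P(1), symmetric])
  qed
  with that show ?thesis by blast
qed

lemma prod_prime_factors_squarefree:
  fixes n :: "'a :: factorial_semiring_multiplicative"
  assumes "squarefree n" "n \<noteq> 0"
  shows "\<Prod>(prime_factors n) = normalize n"
proof -
  have "\<forall>p\<in>prime_factors n. multiplicity p n = 1"
    using assms squarefree_factorial_semiring' by blast
  then have "\<Prod>(prime_factors n) = (\<Prod>p\<in>prime_factors n. p ^ multiplicity p n)"
    by (intro prod.cong) auto
  also have "\<dots> = normalize n"
    using assms(2) by (rule prod_prime_factors)
  finally show ?thesis .
qed

lemma inj_on_prime_factors_squarefree: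
  "inj_on prime_factors {n :: nat. n \<ge> 1 \<and> squarefree n}"
proof (rule inj_onI)
  fix m n :: nat
  assume "m \<in> {n. n \<ge> 1 \<and> squarefree n}" "n \<in> {n. n \<ge> 1 \<and> squarefree n}"
    and "prime_factors m = prime_factors n"
  then have "m \<noteq> 0" "squarefree m" "n \<noteq> 0" "squarefree n"
    by simp_all
  then have "m = \<Prod>(prime_factors m)" "n = \<Prod>(prime_factors n)"
    by (simp_all add: prod_prime_factors_squarefree)
  with \<open>prime_factors m = prime_factors n\<close> show "m = n"
    by simp
qed

lemma sum_squarefree_prod_le_prod_one_plus:
  fixes a :: "nat \<Rightarrow> real"
  assumes "finite F" "F \<subseteq> {n. n \<ge> 1 \<and> squarefree n}" "\<And>p. prime p \<Longrightarrow> 0 \<le> a p"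
  shows "(\<Sum>n\<in>F. \<Prod>p\<in>prime_factors n. a p) \<le> (\<Prod>p\<in>(\<Union>n\<in>F. prime_factors n). 1 + a p)"
proof -
  define P where "P = (\<Union>n\<in>F. prime_factors n)"
  have "finite P"
    using assms(1) by (simp add: P_def)
  have P_primes: "prime p" if "p \<in> P" for p
    using that by (auto simp: P_def)
  have "(\<Sum>n\<in>F. \<Prod>p\<in>prime_factors n. a p) = (\<Sum>S\<in>prime_factors ` F. prod a S)"
    using inj_on_prime_factors_squarefree assms(2)
    by (simp add: sum.reindex inj_on_subset[of prime_factors])
  also have "\<dots> \<le> (\<Sum>S\<in>Pow P. prod a S)"
  proof (rule sum_mono2)
    show "finite (Pow P)"
      using \<open>finite P\<close> by simp
    show "prime_factors ` F \<subseteq> Pow P"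
      by (auto simp: P_def)
    show "0 \<le> prod a S" if "S \<in> Pow P - prime_factors ` F" for S
      using that P_primes assms(3) by (auto intro!: prod_nonneg)
  qed
  also have "\<dots> = (\<Prod>p\<in>P. a p + 1)"
    using prod_add[OF \<open>finite P\<close>, of a "\<lambda>_. 1"] by simp
  finally show ?thesis
    by (simp add: P_def add.commute)
qed

lemma nonneg_has_sum_le_finite_sums:
  fixes f :: "'a \<Rightarrow> real"
  assumes "\<And>x. x \<in> A \<Longrightarrow> 0 \<le> f x" "\<And>F. finite F \<Longrightarrow> F \<subseteq> A \<Longrightarrow> sum f F \<le> B"
  shows "\<exists>s. (f has_sum s) A \<and> s \<le> B"
proof -
  have "f summable_on A"
    using assms by (intro nonneg_bdd_above_summable_on bdd_aboveI) auto
  then show ?thesis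
    using assms(2) by (intro exI[of _ "infsum f A"] conjI has_sum_infsum infsum_le_finite_sums)
qed

theorem lemmaB1:
  fixes \<epsilon> :: real
  assumes "\<epsilon> > 0"
  shows "\<exists>C::real. \<forall>X::real. X > 1 \<longrightarrow>
           (\<exists>s. ((\<lambda>n::nat. \<Prod>p\<in>prime_factors n. ln X / (real p * ln (real p)))
                    has_sum s) {n. n \<ge> 1 \<and> squarefree n}
                \<and> s \<le> C * X powr \<epsilon>)"
proof -
  define b where "b p = 1 / (real p * ln (real p))" for p :: nat
  have b_nonneg: "0 \<le> b p" if "prime p" for p
    using prime_gt_1_nat[OF that] by (simp add: b_def)
  obtain C where C: "\<And>L P. 0 \<le> L \<Longrightarrow> finite P \<Longrightarrow> P \<subseteq> {p. prime p} \<Longrightarrow>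
                         (\<Prod>p\<in>P. 1 + L * b p) \<le> C * exp (\<epsilon> * L)"
    using summable_on_prod_one_plus_mult_le_exp[of b "{p. prime p}" \<epsilon>] summable_on_inverse_prime_mult_ln
      b_nonneg assms unfolding b_def by auto
  have "\<exists>s. ((\<lambda>n. \<Prod>p\<in>prime_factors n. ln X / (real p * ln (real p))) has_sum s)
              {n. n \<ge> 1 \<and> squarefree n} \<and> s \<le> C * X powr \<epsilon>" if "X > 1" for X
  proof (rule nonneg_has_sum_le_finite_sums)
    have factor: "ln X / (real p * ln (real p)) = ln X * b p" for p
      by (simp add: b_def)
    show "0 \<le> (\<Prod>p\<in>prime_factors n. ln X / (real p * ln (real p)))" for n
    proof (rule prod_nonneg)
      fix p assume "p \<in> prime_factors n"
      then have "0 \<le> b p"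
        by (intro b_nonneg in_prime_factors_imp_prime)
      with \<open>X > 1\<close> show "0 \<le> ln X / (real p * ln (real p))"
        by (simp add: factor)
    qed
    fix F :: "nat set" assume F: "finite F" "F \<subseteq> {n. n \<ge> 1 \<and> squarefree n}"
    have "(\<Sum>n\<in>F. \<Prod>p\<in>prime_factors n. ln X * b p) \<le> (\<Prod>p\<in>(\<Union>n\<in>F. prime_factors n). 1 + ln X * b p)"
      using F \<open>X > 1\<close> b_nonneg by (intro sum_squarefree_prod_le_prod_one_plus) auto
    also have "\<dots> \<le> C * exp (\<epsilon> * ln X)"
      using F \<open>X > 1\<close> by (intro C) auto
    finally show "(\<Sum>n\<in>F. \<Prod>p\<in>prime_factors n. ln X / (real p * ln (real p))) \<le> C * X powr \<epsilon>"
      using \<open>X > 1\<close> by (simp add: factor powr_def)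
  qed
  then show ?thesis by blast
qed

end
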